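(* Let $G=G(n_1,n_2,p)$ where $1\ll n_1\leq n_2$. If $p=\frac{d}{\sqrt{n_1n_2}}$ for a constant $d<1$, then whp $G$ has no complex component.
   Context: $G(n_1,n_2,p)$ is the binomial random bipartite graph: each edge of $K_{n_1,n_2}$ is present independently with probability $p$. A component of a graph is complex if it contains more than one cycle. $1\ll n_1$ means $n_1\to\infty$; "whp" means with probability tending to $1$ as $n_1\to\infty$. *)

theory Defs
  imports "HOL-Probability.Probability"
begin

text \<open>Vertex classes are
  Inl ` {..<n1} and Inr ` {..<n2}; a graph is given by its edge indicator
  E :: nat \<times> nat \<Rightarrow> bool, where E (i,j) means that Inl i and Inr j are adjacent.\<close>

definition bip_random_graph :: "nat \<Rightarrow> nat \<Rightarrow> real \<Rightarrow> (nat \<times> nat \<Rightarrow> bool) pmf" where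
  "bip_random_graph n1 n2 p = Pi_pmf ({..<n1} \<times> {..<n2}) False (\<lambda>_. bernoulli_pmf p)"

definition bip_vertices :: "nat \<Rightarrow> nat \<Rightarrow> (nat + nat) set" where
  "bip_vertices n1 n2 = Inl ` {..<n1} \<union> Inr ` {..<n2}"

definition bip_adj :: "nat \<Rightarrow> nat \<Rightarrow> (nat \<times> nat \<Rightarrow> bool) \<Rightarrow> nat + nat \<Rightarrow> nat + nat \<Rightarrow> bool" where
  "bip_adj n1 n2 E u v =
     (case (u, v) of
        (Inl i, Inr j) \<Rightarrow> i < n1 \<and> j < n2 \<and> E (i, j)
      | (Inr j, Inl i) \<Rightarrow> i < n1 \<and> j < n2 \<and> E (i, j)
      | _ \<Rightarrow> False)"

definition is_cycle :: "('v \<Rightarrow> 'v \<Rightarrow> bool) \<Rightarrow> 'v list \<Rightarrow> bool" where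
  "is_cycle A cs \<longleftrightarrow> length cs \<ge> 3 \<and> distinct cs \<and>
     (\<forall>i < length cs. A (cs ! i) (cs ! ((i + 1) mod length cs)))"

text \<open>The edge set of a cycle (cycles are identified with their edge sets).\<close>
definition cycle_edges :: "'v list \<Rightarrow> 'v set set" where
  "cycle_edges cs = {{cs ! i, cs ! ((i + 1) mod length cs)} | i. i < length cs}"

definition components :: "'v set \<Rightarrow> ('v \<Rightarrow> 'v \<Rightarrow> bool) \<Rightarrow> 'v set set" where
  "components V A = {{w \<in> V. A\<^sup>*\<^sup>* v w} | v. v \<in> V}"

definition complex_component :: "'v set \<Rightarrow> ('v \<Rightarrow> 'v \<Rightarrow> bool) \<Rightarrow> 'v set \<Rightarrow> bool" where
  "complex_component V A C \<longleftrightarrow> C \<in> components V A \<and>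
     (\<exists>c1 c2. is_cycle A c1 \<and> is_cycle A c2 \<and> set c1 \<subseteq> C \<and> set c2 \<subseteq> C \<and>
              cycle_edges c1 \<noteq> cycle_edges c2)"

definition has_complex_component :: "nat \<Rightarrow> nat \<Rightarrow> (nat \<times> nat \<Rightarrow> bool) \<Rightarrow> bool" where
  "has_complex_component n1 n2 E \<longleftrightarrow>
     (\<exists>C. complex_component (bip_vertices n1 n2) (bip_adj n1 n2 E) C)"

end

theory Submission
  imports Defs "HOL-Real_Asymp.Real_Asymp"
begin

text \<open>
  Two different cycles in one component, together with a shortest path joining them, span a
  connected graph of minimum degree two with a vertex of degree three. A longest path in this
  graph cannot be extended, so each of its end vertices has a chord back into the path; if the
  only such chords close the path into a cycle, the vertex of degree three provides a second
  chord. Either way we get a path on \<open>m\<close> vertices with a chord at each end, that is, \<open>m\<close> vertices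
  spanning \<open>m + 1\<close> edges. In \<open>G(n\<^sub>1, n\<^sub>2, p)\<close> the vertices of such a path alternate between the two
  sides, so there are at most \<open>2 (n\<^sub>1 n\<^sub>2)\<^bsup>(m+1)/2\<^esup> m\<^sup>2 / n\<^sub>1\<close> candidates, each present with
  probability \<open>p\<^bsup>m+1\<^esup>\<close>. For \<open>p = d / \<surd>(n\<^sub>1 n\<^sub>2)\<close> their expected number is at most
  \<open>2 m\<^sup>2 d\<^bsup>m+1\<^esup> / n\<^sub>1\<close>, and summing over \<open>m\<close> bounds the probability of a complex component
  by \<open>O(1 / n\<^sub>1)\<close>.
\<close>

section \<open>Paths with a chord at each end\<close>

text \<open>The last conjunct keeps the two chords apart, so the path and its chords are
  \<open>length vs + 1\<close> distinct edges.\<close>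

definition two_chord_path :: "('v \<Rightarrow> 'v \<Rightarrow> bool) \<Rightarrow> 'v list \<Rightarrow> nat \<Rightarrow> nat \<Rightarrow> bool" where
  "two_chord_path A vs i j \<longleftrightarrow> distinct vs \<and> successively A vs \<and>
     2 \<le> i \<and> i < length vs \<and> j + 3 \<le> length vs \<and>
     A (vs ! 0) (vs ! i) \<and> A (vs ! (length vs - 1)) (vs ! j) \<and> \<not> (i = length vs - 1 \<and> j = 0)"

lemma two_chord_path_mono:
  assumes "two_chord_path R vs i j" and "\<And>u v. R u v \<Longrightarrow> A u v"
  shows "two_chord_path A vs i j"
  using assms successively_mono[of R vs A] by (auto simp: two_chord_path_def)

lemma successively_rotate_cyclic:
  assumes "successively R xs" and "R (last xs) (hd xs)"
  shows "successively R (rotate n xs) \<and> R (last (rotate n xs)) (hd (rotate n xs))"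
proof (induction n)
  case 0
  then show ?case using assms by simp
next
  case (Suc n)
  have rotate1_cyclic: "successively R (rotate1 ys) \<and> R (last (rotate1 ys)) (hd (rotate1 ys))"
    if "successively R ys" "R (last ys) (hd ys)" for ys
  proof (cases ys)
    case (Cons y zs)
    then show ?thesis
      using that by (cases "zs = []") (auto simp: successively_append_iff successively_Cons)
  qed (use that in simp)
  show ?case using rotate1_cyclic Suc by simp
qed

lemma hd_rotate_nth: "t < length xs \<Longrightarrow> hd (rotate t xs) = xs ! t"
  using hd_rotate_conv_nth[of xs t] by fastforce

locale finite_graph =
  fixes R :: "'v \<Rightarrow> 'v \<Rightarrow> bool" and W :: "'v set"
  assumes finite_vertices: "finite W"
    and edge_sym: "R u v \<Longrightarrow> R v u"
    and edge_irrefl: "\<not> R u u"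
    and edge_vertex: "R u v \<Longrightarrow> u \<in> W"
begin

definition simple_path :: "'v list \<Rightarrow> bool" where
  "simple_path vs \<longleftrightarrow> vs \<noteq> [] \<and> distinct vs \<and> successively R vs \<and> set vs \<subseteq> W"

definition longest_path :: "'v list \<Rightarrow> bool" where
  "longest_path vs \<longleftrightarrow> simple_path vs \<and> (\<forall>ws. simple_path ws \<longrightarrow> length ws \<le> length vs)"

lemma ex_longest_path:
  assumes "x \<in> W" shows "\<exists>vs. longest_path vs"
proof -
  have "simple_path [x]" using assms by (simp add: simple_path_def)
  moreover have "length ws \<le> card W" if "simple_path ws" for ws
    using that finite_vertices by (metis simple_path_def card_mono distinct_card)
  ultimately show ?thesis
    unfolding longest_path_def using ex_has_greatest_nat[of simple_path "[x]" length "Suc (card W)"]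
    by (meson le_imp_less_Suc)
qed

lemma longest_path_rev:
  assumes "longest_path vs" shows "longest_path (rev vs)"
proof -
  have "successively R vs" using assms by (simp add: longest_path_def simple_path_def)
  then have "successively (\<lambda>x y. R y x) vs" by (rule successively_mono) (rule edge_sym)
  then show ?thesis using assms by (simp add: longest_path_def simple_path_def)
qed

lemma longest_path_hd_neighbour:
  assumes "longest_path vs" and "R (hd vs) y"
  shows "y \<in> set vs"
proof (rule ccontr)
  assume "y \<notin> set vs"
  then have "simple_path (y # vs)"
    using assms edge_sym edge_vertex by (auto simp: longest_path_def simple_path_def successively_Cons)
  then show False using assms(1) by (fastforce simp: longest_path_def)
qed

lemma longest_path_hd_chord:
  assumes "longest_path vs" and "\<exists>a b. a \<noteq> b \<and> R (vs ! 0) a \<and> R (vs ! 0) b"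
  shows "\<exists>i. 2 \<le> i \<and> i < length vs \<and> R (vs ! 0) (vs ! i)"
proof -
  have vs: "vs \<noteq> []" "distinct vs" using assms(1) by (auto simp: longest_path_def simple_path_def)
  obtain a b where ab: "a \<noteq> b" "R (vs ! 0) a" "R (vs ! 0) b" using assms(2) by blast
  have "a \<in> set vs" "b \<in> set vs"
    using ab longest_path_hd_neighbour[OF assms(1)] vs by (auto simp: hd_conv_nth)
  then obtain k l where kl: "k < length vs" "vs ! k = a" "l < length vs" "vs ! l = b"
    by (auto simp: in_set_conv_nth)
  have "k \<noteq> 0" "l \<noteq> 0" using kl ab edge_irrefl by metis+
  moreover have "k \<noteq> l" using kl ab by auto
  ultimately show ?thesis using kl ab by (metis less_2_cases not_le)
qed

lemma longest_path_last_chord: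
  assumes "longest_path vs"
    and "\<exists>a b. a \<noteq> b \<and> R (vs ! (length vs - 1)) a \<and> R (vs ! (length vs - 1)) b"
  shows "\<exists>j. j + 3 \<le> length vs \<and> R (vs ! (length vs - 1)) (vs ! j)"
proof -
  have "vs \<noteq> []" using assms(1) by (auto simp: longest_path_def simple_path_def)
  then have "rev vs ! 0 = vs ! (length vs - 1)" by (simp add: rev_nth)
  then obtain i where i: "2 \<le> i" "i < length vs" "R (vs ! (length vs - 1)) (rev vs ! i)"
    using longest_path_hd_chord[OF longest_path_rev[OF assms(1)]] assms(2) by auto
  then have "rev vs ! i = vs ! (length vs - 1 - i)" by (simp add: rev_nth)
  then show ?thesis using i by (intro exI[of _ "length vs - 1 - i"]) auto
qed

lemma cyclic_longest_path_rotate: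
  assumes "longest_path vs" and "R (last vs) (hd vs)"
  shows "longest_path (rotate n vs) \<and> R (last (rotate n vs)) (hd (rotate n vs))"
  using assms successively_rotate_cyclic[of R vs n]
  by (auto simp: longest_path_def simple_path_def)

lemma cyclic_longest_path_neighbour:
  assumes "longest_path vs" and "R (last vs) (hd vs)" and "u \<in> set vs" and "R u v"
  shows "v \<in> set vs"
proof -
  obtain t where t: "t < length vs" "vs ! t = u" using assms(3) by (auto simp: in_set_conv_nth)
  then have "hd (rotate t vs) = u" by (simp add: hd_rotate_nth)
  then have "v \<in> set (rotate t vs)"
    using longest_path_hd_neighbour cyclic_longest_path_rotate[OF assms(1,2)] assms(4) by metis
  then show ?thesis by simp
qed

lemma cyclic_longest_path_two_chord_path:
  assumes "longest_path vs" and "R (last vs) (hd vs)" and "x \<in> set vs"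
    and "R x a" "R x b" "R x c" "a \<noteq> b" "a \<noteq> c" "b \<noteq> c"
  shows "\<exists>ws i. two_chord_path R ws i 0"
proof -
  obtain t where t: "t < length vs" "vs ! t = x" using assms(3) by (auto simp: in_set_conv_nth)
  define ws where "ws = rotate t vs"
  define m where "m = length ws"
  have ws: "longest_path ws" "R (last ws) (hd ws)" "hd ws = x"
    using cyclic_longest_path_rotate[OF assms(1,2), of t] hd_rotate_nth[OF t(1)] t(2)
    by (simp_all add: ws_def)
  then have ws': "ws \<noteq> []" "distinct ws" "successively R ws" "ws ! 0 = x" "ws ! (m - 1) = last ws"
    by (auto simp: longest_path_def simple_path_def m_def hd_conv_nth last_conv_nth)
  have "x \<in> set ws" using ws(3) ws'(1) hd_in_set by blast
  then have "y \<in> set ws" if "R x y" for y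
    using cyclic_longest_path_neighbour[OF ws(1,2)] that by blast
  then obtain ka kb kc where k: "ka < m" "ws ! ka = a" "kb < m" "ws ! kb = b" "kc < m" "ws ! kc = c"
    using assms(4-6) unfolding in_set_conv_nth m_def by meson
  have "ka \<noteq> 0" "kb \<noteq> 0" "kc \<noteq> 0" using k ws'(4) assms(4-6) edge_irrefl by metis+
  moreover have "ka \<noteq> kb" "ka \<noteq> kc" "kb \<noteq> kc" using k assms(7-9) by auto
  ultimately have "(2 \<le> ka \<and> ka \<noteq> m - 1) \<or> (2 \<le> kb \<and> kb \<noteq> m - 1) \<or> (2 \<le> kc \<and> kc \<noteq> m - 1)"
    by auto
  then obtain i where i: "2 \<le> i" "i < m" "i \<noteq> m - 1" "R (ws ! 0) (ws ! i)"
    using k ws'(4) assms(4-6) by blast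
  then have "two_chord_path R ws i 0"
    using ws'(2,3,5) ws(2,3) by (simp add: two_chord_path_def m_def hd_conv_nth ws'(1))
  then show ?thesis by blast
qed

theorem ex_two_chord_path:
  assumes min_degree: "\<And>w. w \<in> W \<Longrightarrow> \<exists>a b. a \<noteq> b \<and> R w a \<and> R w b"
    and branch: "R x a" "R x b" "R x c" "a \<noteq> b" "a \<noteq> c" "b \<noteq> c"
    and connected: "\<And>S. S \<subseteq> W \<Longrightarrow> S \<noteq> {} \<Longrightarrow> (\<forall>u v. u \<in> S \<longrightarrow> R u v \<longrightarrow> v \<in> S) \<Longrightarrow> x \<in> S"
  shows "\<exists>vs i j. two_chord_path R vs i j"
proof -
  obtain vs where vs: "longest_path vs" using ex_longest_path edge_vertex branch(1) by blast
  define m where "m = length vs"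
  have vs': "vs \<noteq> []" "distinct vs" "successively R vs" "set vs \<subseteq> W"
    using vs by (auto simp: longest_path_def simple_path_def)
  have ends: "vs ! 0 \<in> W" "vs ! (m - 1) \<in> W" using vs' by (auto simp: m_def)
  obtain i0 where i0: "2 \<le> i0" "i0 < m" "R (vs ! 0) (vs ! i0)"
    using longest_path_hd_chord[OF vs] min_degree[OF ends(1)] by (auto simp: m_def)
  obtain j0 where j0: "j0 + 3 \<le> m" "R (vs ! (m - 1)) (vs ! j0)"
    using longest_path_last_chord[OF vs] min_degree[OF ends(2)] by (auto simp: m_def)
  txt \<open>If neither end has a chord to an inner vertex, then \<open>i0 = m - 1\<close> and \<open>vs\<close> closes up to a
    cycle, which by maximality contains the whole component of \<open>x\<close>.\<close>
  consider (hd_chord) i where "2 \<le> i" "i < m - 1" "R (vs ! 0) (vs ! i)"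
    | (last_chord) j where "0 < j" "j + 3 \<le> m" "R (vs ! (m - 1)) (vs ! j)"
    | (cyclic) "R (last vs) (hd vs)"
    using i0 j0 edge_sym vs'(1)
    by (metis bot_nat_0.not_eq_extremum hd_conv_nth last_conv_nth m_def)
  then show ?thesis
  proof cases
    case hd_chord
    then have "two_chord_path R vs i j0" using vs' j0 by (auto simp: two_chord_path_def m_def)
    then show ?thesis by blast
  next
    case last_chord
    then have "two_chord_path R vs i0 j" using vs' i0 by (auto simp: two_chord_path_def m_def)
    then show ?thesis by blast
  next
    case cyclic
    have "x \<in> set vs"
      using connected[OF vs'(4)] cyclic_longest_path_neighbour[OF vs cyclic] vs'(1) by auto
    then show ?thesis using cyclic_longest_path_two_chord_path[OF vs cyclic _ branch] by blast
  qed
qed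

end

section \<open>Complex components contain a path with two chords\<close>

definition path_edges :: "'v list \<Rightarrow> 'v set set" where
  "path_edges vs = {{vs ! k, vs ! Suc k} | k. Suc k < length vs}"

lemma path_edges_subset_cycle_edges: "path_edges c \<subseteq> cycle_edges c"
proof
  fix e assume "e \<in> path_edges c"
  then obtain k where "Suc k < length c" "e = {c ! k, c ! Suc k}" by (auto simp: path_edges_def)
  then show "e \<in> cycle_edges c" unfolding cycle_edges_def by force
qed

lemma path_edge_endpoints:
  assumes "distinct vs" "successively A vs" "e \<in> path_edges vs"
  shows "\<exists>u v. e = {u, v} \<and> u \<noteq> v \<and> u \<in> set vs \<and> v \<in> set vs \<and> A u v"
proof -
  obtain k where k: "Suc k < length vs" "e = {vs ! k, vs ! Suc k}"
    using assms(3) by (auto simp: path_edges_def)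
  then have "vs ! k \<noteq> vs ! Suc k" using assms(1) by (simp add: nth_eq_iff_index_eq)
  then show ?thesis using k assms(2)
    by (intro exI[of _ "vs ! k"] exI[of _ "vs ! Suc k"]) (simp add: successively_nth)
qed

lemma path_inner_vertex_two_edges:
  assumes "distinct vs" "0 < k" "Suc k < length vs"
  shows "vs ! (k - 1) \<noteq> vs ! Suc k \<and> {vs ! k, vs ! (k - 1)} \<in> path_edges vs
    \<and> {vs ! k, vs ! Suc k} \<in> path_edges vs"
proof -
  have "{vs ! (k - 1), vs ! Suc (k - 1)} \<in> path_edges vs" "{vs ! k, vs ! Suc k} \<in> path_edges vs"
    using assms(2,3) unfolding path_edges_def by (fastforce, blast)
  then show ?thesis using assms by (simp add: insert_commute nth_eq_iff_index_eq)
qed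

lemma path_edges_closed_subset:
  assumes closed: "\<And>u v. u \<in> S \<Longrightarrow> {u, v} \<in> path_edges vs \<Longrightarrow> v \<in> S"
    and "y \<in> set vs" "y \<in> S"
  shows "set vs \<subseteq> S"
proof -
  have step: "vs ! k \<in> S \<longleftrightarrow> vs ! Suc k \<in> S" if "Suc k < length vs" for k
    using closed[of "vs ! k" "vs ! Suc k"] closed[of "vs ! Suc k" "vs ! k"] that
    by (auto simp: path_edges_def insert_commute)
  have "vs ! k \<in> S \<longleftrightarrow> vs ! 0 \<in> S" if "k < length vs" for k
    using that by (induction k) (simp_all add: step)
  then show ?thesis using assms(2,3) by (auto simp: in_set_conv_nth)
qed

lemma cycle_edge_endpoints:
  assumes "is_cycle A c" "e \<in> cycle_edges c"
  shows "\<exists>u v. e = {u, v} \<and> u \<noteq> v \<and> u \<in> set c \<and> v \<in> set c \<and> A u v"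
proof -
  define L where "L = length c"
  obtain i where i: "i < L" "e = {c ! i, c ! ((i + 1) mod L)}"
    using assms(2) by (auto simp: cycle_edges_def L_def)
  have L: "3 \<le> L" "distinct c" using assms(1) by (auto simp: is_cycle_def L_def)
  then have "(i + 1) mod L < L" "(i + 1) mod L \<noteq> i"
    using i(1) by (auto simp: mod_Suc)
  then have "c ! i \<noteq> c ! ((i + 1) mod L)" using L i(1) by (simp add: nth_eq_iff_index_eq L_def)
  moreover have "A (c ! i) (c ! ((i + 1) mod L))" using assms(1) i(1) by (simp add: is_cycle_def L_def)
  ultimately show ?thesis using i \<open>(i + 1) mod L < L\<close>
    by (intro exI[of _ "c ! i"] exI[of _ "c ! ((i + 1) mod L)"]) (simp add: L_def)
qed

lemma cycle_vertex_two_edges: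
  assumes "is_cycle A c" "x \<in> set c"
  shows "\<exists>a b. a \<noteq> b \<and> {x, a} \<in> cycle_edges c \<and> {x, b} \<in> cycle_edges c"
proof -
  define L where "L = length c"
  have L: "3 \<le> L" "distinct c" using assms(1) by (auto simp: is_cycle_def L_def)
  obtain k where k: "k < L" "c ! k = x" using assms(2) by (auto simp: in_set_conv_nth L_def)
  define p where "p = (if k = 0 then L - 1 else k - 1)"
  have p: "p < L" "(p + 1) mod L = k" "(k + 1) mod L < L" "(k + 1) mod L \<noteq> p"
    using k L by (auto simp: p_def mod_Suc)
  have "{x, c ! ((k + 1) mod L)} \<in> cycle_edges c" "{c ! p, x} \<in> cycle_edges c"
    using k p unfolding cycle_edges_def L_def by force+
  moreover have "c ! ((k + 1) mod L) \<noteq> c ! p" using L p by (simp add: nth_eq_iff_index_eq L_def)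
  ultimately show ?thesis by (metis insert_commute)
qed

text \<open>The first edge of \<open>Q\<close> is not an edge of \<open>c1\<close>, so \<open>Q ! 0\<close> has degree three in the union
  of \<open>c1\<close>, \<open>c2\<close> and \<open>Q\<close>.\<close>

locale joined_cycles =
  fixes A :: "'v \<Rightarrow> 'v \<Rightarrow> bool" and c1 c2 Q :: "'v list"
  assumes adj_sym: "A u v \<Longrightarrow> A v u"
    and cycle1: "is_cycle A c1" and cycle2: "is_cycle A c2"
    and path: "distinct Q" "successively A Q" "2 \<le> length Q"
    and path_start: "Q ! 0 \<in> set c1" and path_end: "last Q \<in> set c2"
    and path_leaves: "{Q ! 0, Q ! 1} \<notin> cycle_edges c1"
begin

definition edges :: "'v set set" where
  "edges = cycle_edges c1 \<union> cycle_edges c2 \<union> path_edges Q"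

definition vertices :: "'v set" where
  "vertices = set c1 \<union> set c2 \<union> set Q"

definition adj :: "'v \<Rightarrow> 'v \<Rightarrow> bool" where
  "adj u v \<longleftrightarrow> {u, v} \<in> edges"

lemma edge_endpoints:
  assumes "e \<in> edges"
  shows "\<exists>u v. e = {u, v} \<and> u \<noteq> v \<and> u \<in> vertices \<and> v \<in> vertices \<and> A u v"
  using assms cycle_edge_endpoints[OF cycle1, of e] cycle_edge_endpoints[OF cycle2, of e]
    path_edge_endpoints[OF path(1,2), of e]
  unfolding edges_def vertices_def by blast

lemma adj_imp_ambient: "adj u v \<Longrightarrow> A u v"
  using edge_endpoints[of "{u, v}"] adj_sym by (auto simp: adj_def doubleton_eq_iff)

sublocale union: finite_graph adj vertices
proof
  show "finite vertices" by (simp add: vertices_def)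
  show "adj v u" if "adj u v" for u v using that by (simp add: adj_def insert_commute)
  show "\<not> adj u u" for u using edge_endpoints[of "{u}"] by (auto simp: adj_def doubleton_eq_iff)
  show "u \<in> vertices" if "adj u v" for u v
    using edge_endpoints[of "{u, v}"] that by (auto simp: adj_def doubleton_eq_iff)
qed

lemma cycle_vertex_degree:
  assumes "w \<in> set c1 \<union> set c2"
  shows "\<exists>a b. a \<noteq> b \<and> adj w a \<and> adj w b"
  using assms cycle_vertex_two_edges[OF cycle1, of w] cycle_vertex_two_edges[OF cycle2, of w]
  unfolding adj_def edges_def by blast

lemma min_degree:
  assumes "w \<in> vertices"
  shows "\<exists>a b. a \<noteq> b \<and> adj w a \<and> adj w b"
proof (cases "w \<in> set Q")
  case True
  then obtain k where k: "k < length Q" "Q ! k = w" by (auto simp: in_set_conv_nth)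
  have Q_last: "Q ! (length Q - 1) = last Q" using path(3) by (cases Q) (simp_all add: last_conv_nth)
  consider "k = 0" | "k = length Q - 1" | "0 < k" "Suc k < length Q" using k(1) by linarith
  then show ?thesis
  proof cases
    case 1
    then show ?thesis using cycle_vertex_degree path_start k(2) by blast
  next
    case 2
    then show ?thesis using cycle_vertex_degree path_end k(2) Q_last by (metis UnI2)
  next
    case 3
    then show ?thesis
      using path_inner_vertex_two_edges[OF path(1) 3] k(2) by (auto simp: adj_def edges_def)
  qed
qed (use assms cycle_vertex_degree in \<open>auto simp: vertices_def\<close>)

lemma branch_at_start:
  obtains a b where "adj (Q ! 0) a" "adj (Q ! 0) b" "adj (Q ! 0) (Q ! 1)"
    "a \<noteq> b" "a \<noteq> Q ! 1" "b \<noteq> Q ! 1"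
proof -
  obtain a b where ab: "a \<noteq> b" "{Q ! 0, a} \<in> cycle_edges c1" "{Q ! 0, b} \<in> cycle_edges c1"
    using cycle_vertex_two_edges[OF cycle1 path_start] by blast
  have "{Q ! 0, Q ! 1} \<in> path_edges Q" using path(3) unfolding path_edges_def by force
  then show ?thesis using that ab path_leaves by (auto simp: adj_def edges_def)
qed

lemma connected:
  assumes "S \<subseteq> vertices" "S \<noteq> {}" and closed: "\<forall>u v. u \<in> S \<longrightarrow> adj u v \<longrightarrow> v \<in> S"
  shows "Q ! 0 \<in> S"
proof -
  have spread: "set vs \<subseteq> S" if "path_edges vs \<subseteq> edges" "y \<in> set vs" "y \<in> S" for vs y
    using path_edges_closed_subset[of S vs y] that closed by (auto simp: adj_def)
  have "path_edges c1 \<subseteq> edges" "path_edges c2 \<subseteq> edges" "path_edges Q \<subseteq> edges"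
    using path_edges_subset_cycle_edges[of c1] path_edges_subset_cycle_edges[of c2]
    by (auto simp: edges_def)
  note spread = spread[OF this(1)] spread[OF this(2)] spread[OF this(3)]
  obtain s where s: "s \<in> S" "s \<in> vertices" using assms(1,2) by blast
  have "last Q \<in> set Q" "Q ! 0 \<in> set Q" using path(3) by (cases Q; simp)+
  then show ?thesis using s spread path_start path_end unfolding vertices_def by blast
qed

theorem ex_two_chord_path: "\<exists>vs i j. two_chord_path A vs i j"
proof -
  obtain a b where "adj (Q ! 0) a" "adj (Q ! 0) b" "adj (Q ! 0) (Q ! 1)"
    "a \<noteq> b" "a \<noteq> Q ! 1" "b \<noteq> Q ! 1"
    by (rule branch_at_start)
  then obtain vs i j where "two_chord_path adj vs i j"
    using union.ex_two_chord_path[OF min_degree] connected by blast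
  then show ?thesis using two_chord_path_mono adj_imp_ambient by blast
qed

end

lemma rtranclp_imp_walk:
  assumes "A\<^sup>*\<^sup>* u w"
  shows "\<exists>ws. ws \<noteq> [] \<and> hd ws = u \<and> last ws = w \<and> successively A ws"
  using assms
proof (induction rule: rtranclp_induct)
  case base
  show ?case by (intro exI[of _ "[u]"]) simp
next
  case (step y z)
  then obtain ws where "ws \<noteq> []" "hd ws = u" "last ws = y" "successively A ws" by blast
  then show ?case using step(2) by (intro exI[of _ "ws @ [z]"]) (simp add: successively_append_iff)
qed

lemma successively_shortcut:
  assumes "successively A xs" "a < b" "b < length xs" "xs ! a = xs ! b"
  shows "successively A (take a xs @ drop b xs)"
proof -
  have parts: "successively A (take n xs)" "successively A (drop n xs)" for n
    using assms(1) successively_append_iff[of A "take n xs" "drop n xs"] by simp_all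
  have "take a xs = [] \<or> A (last (take a xs)) (hd (drop a xs))"
    using assms successively_append_iff[of A "take a xs" "drop a xs"] by auto
  moreover have "hd (drop a xs) = hd (drop b xs)" using assms(2-4) by (simp add: hd_drop_conv_nth)
  ultimately show ?thesis using parts by (auto simp: successively_append_iff)
qed

lemma shortest_walk_distinct:
  assumes "successively A ws"
    and shortest: "\<And>ys. successively A ys \<Longrightarrow> ys \<noteq> [] \<Longrightarrow> hd ys = hd ws \<Longrightarrow> last ys = last ws
      \<Longrightarrow> length ws \<le> length ys"
  shows "distinct ws"
proof (rule ccontr)
  assume "\<not> distinct ws"
  then obtain a b where ab: "a < b" "b < length ws" "ws ! a = ws ! b"
    by (metis distinct_conv_nth nat_neq_iff)
  define ys where "ys = take a ws @ drop b ws"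
  have "ws \<noteq> []" "ys \<noteq> []" "last ys = last ws" using ab by (auto simp: ys_def)
  moreover have "hd ys = hd ws"
    using ab \<open>ws \<noteq> []\<close> by (cases "a = 0") (auto simp: ys_def hd_drop_conv_nth hd_append hd_conv_nth)
  moreover have "successively A ys" using successively_shortcut[OF assms(1) ab] by (simp add: ys_def)
  ultimately have "length ws \<le> length ys" using shortest by blast
  then show False using ab by (simp add: ys_def)
qed

lemma ex_shortest_path_between:
  assumes "A\<^sup>*\<^sup>* u w" "u \<in> S1" "w \<in> S2" "S1 \<inter> S2 = {}"
  shows "\<exists>Q. distinct Q \<and> successively A Q \<and> 2 \<le> length Q \<and> Q ! 0 \<in> S1 \<and> last Q \<in> S2
           \<and> Q ! 1 \<notin> S1"
proof -
  define walk where "walk ws \<longleftrightarrow> ws \<noteq> [] \<and> successively A ws \<and> hd ws \<in> S1 \<and> last ws \<in> S2" for ws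
  obtain ws where "walk ws" using rtranclp_imp_walk[OF assms(1)] assms(2,3) by (auto simp: walk_def)
  then obtain Q where Q: "walk Q" and shortest: "\<And>ws. walk ws \<Longrightarrow> length Q \<le> length ws"
    using ex_has_least_nat[of walk ws length] by blast
  have Q0: "Q ! 0 = hd Q" using Q by (simp add: walk_def hd_conv_nth)
  have len: "2 \<le> length Q"
  proof (rule ccontr)
    assume "\<not> 2 \<le> length Q"
    moreover have "length Q \<noteq> 0" using Q by (simp add: walk_def)
    ultimately have "length Q = 1" by linarith
    then have "hd Q = last Q" by (cases Q) auto
    then show False using Q assms(4) by (auto simp: walk_def)
  qed
  have second: "Q ! 1 \<notin> S1"
  proof
    assume "Q ! 1 \<in> S1"
    moreover obtain a b rest where Qs: "Q = a # b # rest"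
      using len by (auto simp: Suc_le_length_iff numeral_2_eq_2)
    ultimately have "walk (b # rest)" using Q by (auto simp: walk_def successively_Cons)
    then show False using shortest[of "b # rest"] Qs by simp
  qed
  have "distinct Q"
    using Q shortest by (intro shortest_walk_distinct[of A]) (auto simp: walk_def)
  then show ?thesis using Q Q0 len second by (auto simp: walk_def)
qed

lemma cycles_shared_vertex_new_edge:
  assumes c1: "is_cycle A c1" and c2: "is_cycle A c2"
    and "set c1 \<inter> set c2 \<noteq> {}" and "\<not> cycle_edges c2 \<subseteq> cycle_edges c1"
  shows "\<exists>x y. x \<in> set c1 \<and> {x, y} \<in> cycle_edges c2 \<and> {x, y} \<notin> cycle_edges c1"
proof (rule ccontr)
  assume old: "\<not> ?thesis"
  have "set c2 \<subseteq> set c1"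
  proof -
    obtain z where "z \<in> set c1" "z \<in> set c2" using assms(3) by blast
    moreover have "v \<in> set c1" if "u \<in> set c1" "{u, v} \<in> path_edges c2" for u v
      using that old path_edges_subset_cycle_edges[of c2] cycle_edge_endpoints[OF c1, of "{u, v}"]
      by (auto simp: doubleton_eq_iff)
    ultimately show ?thesis using path_edges_closed_subset[of "set c1" c2 z] by blast
  qed
  then have "cycle_edges c2 \<subseteq> cycle_edges c1"
    using old cycle_edge_endpoints[OF c2] by blast
  then show False using assms(4) by contradiction
qed

lemma ex_path_joining_cycles:
  assumes sym: "\<And>u v. A u v \<Longrightarrow> A v u"
    and c1: "is_cycle A c1" and c2: "is_cycle A c2"
    and new_edge: "\<not> cycle_edges c2 \<subseteq> cycle_edges c1"
    and reach: "\<And>u w. u \<in> set c1 \<Longrightarrow> w \<in> set c2 \<Longrightarrow> A\<^sup>*\<^sup>* u w"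
  shows "\<exists>Q. distinct Q \<and> successively A Q \<and> 2 \<le> length Q \<and> Q ! 0 \<in> set c1 \<and> last Q \<in> set c2
           \<and> {Q ! 0, Q ! 1} \<notin> cycle_edges c1"
proof (cases "set c1 \<inter> set c2 = {}")
  case True
  obtain u w where uw: "u \<in> set c1" "w \<in> set c2"
    using c1 c2 by (metis is_cycle_def length_0_conv list.set_sel(1) not_numeral_le_zero)
  then obtain Q where Q: "distinct Q" "successively A Q" "2 \<le> length Q" "Q ! 0 \<in> set c1"
      "last Q \<in> set c2" "Q ! 1 \<notin> set c1"
    using ex_shortest_path_between[OF reach[OF uw] uw True] by blast
  have "{Q ! 0, Q ! 1} \<notin> cycle_edges c1"
    using Q(6) cycle_edge_endpoints[OF c1] by (metis doubleton_eq_iff)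
  then show ?thesis using Q by blast
next
  case False
  then obtain x y where xy: "x \<in> set c1" "{x, y} \<in> cycle_edges c2" "{x, y} \<notin> cycle_edges c1"
    using cycles_shared_vertex_new_edge[OF c1 c2 _ new_edge] by blast
  then have "x \<noteq> y" "A x y" "y \<in> set c2"
    using cycle_edge_endpoints[OF c2 xy(2)] sym by (auto simp: doubleton_eq_iff)
  then show ?thesis using xy by (intro exI[of _ "[x, y]"]) simp
qed

theorem complex_component_two_chord_path:
  assumes sym: "\<And>u v. A u v \<Longrightarrow> A v u" and "complex_component V A C"
  shows "\<exists>vs i j. two_chord_path A vs i j"
proof -
  obtain c1 c2 where c: "is_cycle A c1" "is_cycle A c2" "set c1 \<subseteq> C" "set c2 \<subseteq> C"
      "cycle_edges c1 \<noteq> cycle_edges c2" and "C \<in> components V A"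
    using assms(2) by (auto simp: complex_component_def)
  then obtain v where v: "C = {w \<in> V. A\<^sup>*\<^sup>* v w}" by (auto simp: components_def)
  have "symp A\<^sup>*\<^sup>*" using sym by (intro symp_rtranclp) (simp add: sympI)
  then have reach: "A\<^sup>*\<^sup>* u w" if "u \<in> C" "w \<in> C" for u w
    using that v by (metis (no_types, lifting) mem_Collect_eq rtranclp_trans sympD)
  have joined: "\<exists>vs i j. two_chord_path A vs i j"
    if d: "is_cycle A d1" "is_cycle A d2" "set d1 \<subseteq> C" "set d2 \<subseteq> C"
      "\<not> cycle_edges d2 \<subseteq> cycle_edges d1"
    for d1 d2
  proof -
    obtain Q where "distinct Q" "successively A Q" "2 \<le> length Q" "Q ! 0 \<in> set d1"
        "last Q \<in> set d2" "{Q ! 0, Q ! 1} \<notin> cycle_edges d1"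
      using ex_path_joining_cycles[OF sym d(1,2,5)] reach d(3,4) by (meson subsetD)
    then interpret joined_cycles A d1 d2 Q using sym d(1,2) by unfold_locales
    show ?thesis by (rule ex_two_chord_path)
  qed
  show ?thesis
  proof (cases "cycle_edges c2 \<subseteq> cycle_edges c1")
    case True
    then show ?thesis using joined[OF c(2,1,4,3)] c(5) by blast
  next
    case False
    then show ?thesis using joined[OF c(1-4)] by blast
  qed
qed

section \<open>Paths with two chords in the random bipartite graph\<close>

definition two_chord_edges :: "'v list \<Rightarrow> nat \<Rightarrow> nat \<Rightarrow> 'v set set" where
  "two_chord_edges vs i j = path_edges vs \<union> {{vs ! 0, vs ! i}, {vs ! (length vs - 1), vs ! j}}"

lemma two_chord_edges_adjacent:
  assumes "two_chord_path A vs i j" "e \<in> two_chord_edges vs i j"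
  shows "\<exists>u v. e = {u, v} \<and> A u v"
  using assms path_edge_endpoints[of vs A e]
  by (auto simp: two_chord_path_def two_chord_edges_def)

lemma card_two_chord_index_edges:
  assumes "2 \<le> i" "i < m" "j + 3 \<le> m" "\<not> (i = m - 1 \<and> j = 0)"
  shows "card ({{k, Suc k} | k. Suc k < m} \<union> {{0, i}, {m - 1, j}}) = m + 1"
proof -
  have path: "{{k, Suc k} | k. Suc k < m} = (\<lambda>k. {k, Suc k}) ` {..<m - 1}" by auto
  have "inj_on (\<lambda>k. {k, Suc k}) {..<m - 1}" by (rule inj_onI) (auto simp: doubleton_eq_iff)
  then have "card {{k, Suc k} | k. Suc k < m} = m - 1" by (simp add: path card_image)
  moreover have "{0, i} \<notin> {{k, Suc k} | k. Suc k < m}" "{m - 1, j} \<notin> {{k, Suc k} | k. Suc k < m}"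
    "{0, i} \<noteq> {m - 1, j}"
    using assms by (auto simp: doubleton_eq_iff)
  ultimately show ?thesis using assms(2) by (simp add: path)
qed

lemma card_two_chord_edges:
  assumes "two_chord_path A vs i j"
  shows "card (two_chord_edges vs i j) = length vs + 1"
proof -
  define m where "m = length vs"
  define I where "I = {{k, Suc k} | k. Suc k < m} \<union> {{0, i}, {m - 1, j}}"
  have vs: "distinct vs" "2 \<le> i" "i < m" "j + 3 \<le> m" "\<not> (i = m - 1 \<and> j = 0)"
    using assms by (auto simp: two_chord_path_def m_def)
  have "path_edges vs = image (nth vs) ` {{k, Suc k} | k. Suc k < m}"
    unfolding path_edges_def m_def by (auto simp: setcompr_eq_image image_image)
  then have "two_chord_edges vs i j = image (nth vs) ` I"
    by (simp add: two_chord_edges_def I_def m_def)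
  moreover have "inj_on (image (nth vs)) I"
  proof (rule inj_on_subset[OF inj_on_image_Pow])
    show "inj_on (nth vs) {..<m}" using vs(1) by (simp add: inj_on_nth m_def)
    show "I \<subseteq> Pow {..<m}" using vs(3,4) by (auto simp: I_def)
  qed
  ultimately have "card (two_chord_edges vs i j) = card I" by (metis card_image)
  then show ?thesis using card_two_chord_index_edges[OF vs(2-5)] by (simp add: I_def m_def)
qed

fun alternating_lists :: "'a set \<Rightarrow> 'a set \<Rightarrow> nat \<Rightarrow> 'a list set" where
  "alternating_lists A B 0 = {[]}"
| "alternating_lists A B (Suc m) = (\<lambda>(x, xs). x # xs) ` (A \<times> alternating_lists B A m)"

lemma finite_alternating_lists: "finite A \<Longrightarrow> finite B \<Longrightarrow> finite (alternating_lists A B m)"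
  by (induction m arbitrary: A B) simp_all

lemma length_alternating_lists: "xs \<in> alternating_lists A B m \<Longrightarrow> length xs = m"
  by (induction m arbitrary: A B xs) auto

lemma card_alternating_lists_le:
  assumes "finite A" "finite B"
  shows "card (alternating_lists A B m) \<le> card A ^ ((m + 1) div 2) * card B ^ (m div 2)"
  using assms
proof (induction m arbitrary: A B)
  case 0
  then show ?case by simp
next
  case (Suc m)
  have "card (alternating_lists A B (Suc m)) \<le> card (A \<times> alternating_lists B A m)"
    unfolding alternating_lists.simps
    by (rule card_image_le) (simp add: Suc.prems finite_alternating_lists)
  also have "\<dots> = card A * card (alternating_lists B A m)" by (simp add: card_cartesian_product)
  also have "\<dots> \<le> card A * (card B ^ ((m + 1) div 2) * card A ^ (m div 2))"
    using Suc by simp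
  also have "\<dots> = card A ^ ((Suc m + 1) div 2) * card B ^ (Suc m div 2)"
    by (simp add: ac_simps)
  finally show ?case .
qed

lemma successively_alternating_lists:
  assumes "successively R xs" "xs \<noteq> [] \<Longrightarrow> hd xs \<in> A"
    and "\<And>x y. R x y \<Longrightarrow> x \<in> A \<Longrightarrow> y \<in> B" "\<And>x y. R x y \<Longrightarrow> x \<in> B \<Longrightarrow> y \<in> A"
  shows "xs \<in> alternating_lists A B (length xs)"
  using assms
proof (induction xs arbitrary: A B)
  case Nil
  then show ?case by simp
next
  case (Cons x xs)
  have "xs \<in> alternating_lists B A (length xs)"
    using Cons by (intro Cons.IH) (auto simp: successively_Cons)
  then show ?case using Cons.prems(2) by auto
qed

lemma alternating_power_le:
  fixes x y :: real
  assumes "0 < x" "x \<le> y"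
  shows "x * (x ^ ((m + 1) div 2) * y ^ (m div 2)) \<le> sqrt (x * y) ^ (m + 1)"
    and "x * (y ^ ((m + 1) div 2) * x ^ (m div 2)) \<le> sqrt (x * y) ^ (m + 1)"
proof -
  define s where "s = sqrt (x * y)"
  have s: "s * s = x * y" "x \<le> s" "0 \<le> s"
    using assms real_sqrt_le_mono[of "x * x" "x * y"] by (auto simp: s_def)
  obtain k where k: "m = 2 * k \<or> m = 2 * k + 1" by (metis evenE oddE)
  have pow: "s ^ (2 * k) = (x * y) ^ k" by (metis power_mult power2_eq_square s(1))
  from k have "x * (x ^ ((m + 1) div 2) * y ^ (m div 2)) \<le> s ^ (m + 1)
      \<and> x * (y ^ ((m + 1) div 2) * x ^ (m div 2)) \<le> s ^ (m + 1)"
  proof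
    assume m: "m = 2 * k"
    have "x * (x ^ k * y ^ k) = x * (x * y) ^ k" by (simp add: power_mult_distrib)
    also have "\<dots> \<le> s * (x * y) ^ k" using s assms by (intro mult_right_mono) auto
    finally show ?thesis using m pow by (simp add: mult_ac)
  next
    assume m: "m = 2 * k + 1"
    have "x * (x ^ (k + 1) * y ^ k) = x * x * (x * y) ^ k" by (simp add: power_mult_distrib)
    also have "\<dots> \<le> x * y * (x * y) ^ k" using assms by (intro mult_right_mono mult_left_mono) auto
    moreover have "x * (y ^ (k + 1) * x ^ k) = x * y * (x * y) ^ k" by (simp add: power_mult_distrib)
    moreover have "s ^ (m + 1) = x * y * (x * y) ^ k" using m pow s(1) by (simp add: mult_ac)
    ultimately show ?thesis using m by (simp add: mult_ac power_mult_distrib)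
  qed
  then show "x * (x ^ ((m + 1) div 2) * y ^ (m div 2)) \<le> sqrt (x * y) ^ (m + 1)"
    and "x * (y ^ ((m + 1) div 2) * x ^ (m div 2)) \<le> sqrt (x * y) ^ (m + 1)"
    by (simp_all add: s_def)
qed

lemma summable_square_times_power:
  fixes d :: real
  assumes "0 \<le> d" "d < 1"
  shows "summable (\<lambda>m. real m ^ 2 * d ^ (m + 1))"
proof -
  have "conv_radius (\<lambda>m. real m ^ 2) = 1"
    by (rule conv_radius_ratio_limit_nonzero[of _ 1]) (simp_all, real_asymp)
  then have "summable (\<lambda>m. real m ^ 2 * d ^ m)" using assms by (intro summable_in_conv_radius) auto
  then have "summable (\<lambda>m. real m ^ 2 * d ^ m * d)" by (rule summable_mult2)
  then show ?thesis by (simp add: mult_ac)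
qed

lemma bip_adj_iff:
  "bip_adj n1 n2 E u v \<longleftrightarrow>
     (\<exists>i j. i < n1 \<and> j < n2 \<and> E (i, j) \<and> ((u, v) = (Inl i, Inr j) \<or> (u, v) = (Inr j, Inl i)))"
  by (cases u; cases v) (auto simp: bip_adj_def)

definition bip_edge :: "nat \<times> nat \<Rightarrow> (nat + nat) set" where
  "bip_edge e = {Inl (fst e), Inr (snd e)}"

definition bip_edges :: "nat \<Rightarrow> nat \<Rightarrow> (nat \<times> nat \<Rightarrow> bool) \<Rightarrow> (nat + nat) set set" where
  "bip_edges n1 n2 E = {{u, v} | u v. bip_adj n1 n2 E u v}"

lemma inj_bip_edge: "inj bip_edge"
  by (rule injI) (auto simp: bip_edge_def doubleton_eq_iff prod_eq_iff)

lemma bip_edges_eq_image: "bip_edges n1 n2 E = bip_edge ` {e \<in> {..<n1} \<times> {..<n2}. E e}"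
proof (intro equalityI subsetI)
  fix x assume "x \<in> bip_edges n1 n2 E"
  then obtain i j where "i < n1" "j < n2" "E (i, j)" "x = {Inl i, Inr j}"
    unfolding bip_edges_def bip_adj_iff by (auto simp: insert_commute)
  then show "x \<in> bip_edge ` {e \<in> {..<n1} \<times> {..<n2}. E e}"
    by (intro image_eqI[of _ _ "(i, j)"]) (simp_all add: bip_edge_def)
next
  fix x assume "x \<in> bip_edge ` {e \<in> {..<n1} \<times> {..<n2}. E e}"
  then obtain i j where "i < n1" "j < n2" "E (i, j)" "x = {Inl i, Inr j}"
    by (auto simp: bip_edge_def)
  then show "x \<in> bip_edges n1 n2 E" unfolding bip_edges_def bip_adj_iff by blast
qed

lemma prob_edges_present:
  assumes "S \<subseteq> {..<n1} \<times> {..<n2}" "0 \<le> p" "p \<le> 1"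
  shows "measure_pmf.prob (bip_random_graph n1 n2 p) {E. \<forall>e\<in>S. E e} = p ^ card S"
proof -
  define D where "D = {..<n1} \<times> {..<n2}"
  have "{E. \<forall>e\<in>S. E e} = Pi D (\<lambda>e. if e \<in> S then {True} else UNIV)"
    using assms(1) by (auto simp: Pi_def D_def)
  then have "measure_pmf.prob (bip_random_graph n1 n2 p) {E. \<forall>e\<in>S. E e}
      = (\<Prod>e\<in>D. measure_pmf.prob (bernoulli_pmf p) (if e \<in> S then {True} else UNIV))"
    unfolding bip_random_graph_def D_def by (simp add: measure_Pi_pmf_Pi)
  also have "\<dots> = (\<Prod>e\<in>D. if e \<in> S then p else 1)"
    by (intro prod.cong) (auto simp: measure_pmf_single assms(2,3))
  also have "\<dots> = p ^ card S"
    using assms(1) by (simp add: prod.If_cases D_def Int_absorb1 finite_subset)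
  finally show ?thesis .
qed

lemma prob_subset_bip_edges_le:
  assumes "0 \<le> p" "p \<le> 1"
  shows "measure_pmf.prob (bip_random_graph n1 n2 p) {E. D \<subseteq> bip_edges n1 n2 E} \<le> p ^ card D"
proof (cases "\<exists>E. D \<subseteq> bip_edges n1 n2 E")
  case False
  then show ?thesis using assms by simp
next
  case True
  define S where "S = {e \<in> {..<n1} \<times> {..<n2}. bip_edge e \<in> D}"
  have "D \<subseteq> bip_edge ` ({..<n1} \<times> {..<n2})" using True by (auto simp: bip_edges_eq_image)
  then have "D = bip_edge ` S" by (auto simp: S_def)
  then have card: "card S = card D" by (metis card_image inj_bip_edge inj_on_subset subset_UNIV)
  have "{E. D \<subseteq> bip_edges n1 n2 E} \<subseteq> {E. \<forall>e\<in>S. E e}"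
  proof (intro subsetI CollectI ballI)
    fix E e assume "E \<in> {E. D \<subseteq> bip_edges n1 n2 E}" "e \<in> S"
    then have "bip_edge e \<in> bip_edge ` {e \<in> {..<n1} \<times> {..<n2}. E e}"
      by (auto simp: S_def bip_edges_eq_image)
    then show "E e" by (simp add: inj_image_mem_iff[OF inj_bip_edge])
  qed
  then have "measure_pmf.prob (bip_random_graph n1 n2 p) {E. D \<subseteq> bip_edges n1 n2 E}
      \<le> measure_pmf.prob (bip_random_graph n1 n2 p) {E. \<forall>e\<in>S. E e}"
    by (rule measure_pmf.finite_measure_mono) simp
  also have "\<dots> = p ^ card D"
    using prob_edges_present[of S n1 n2 p] assms card by (simp add: S_def)
  finally show ?thesis .
qed

lemma prob_two_chord_path_le:
  assumes "0 \<le> p" "p \<le> 1"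
  shows "measure_pmf.prob (bip_random_graph n1 n2 p) {E. two_chord_path (bip_adj n1 n2 E) vs i j}
    \<le> p ^ (length vs + 1)"
proof (cases "\<exists>E. two_chord_path (bip_adj n1 n2 E) vs i j")
  case False
  then show ?thesis using assms by simp
next
  case True
  then have card: "card (two_chord_edges vs i j) = length vs + 1"
    using card_two_chord_edges by blast
  have "{E. two_chord_path (bip_adj n1 n2 E) vs i j}
      \<subseteq> {E. two_chord_edges vs i j \<subseteq> bip_edges n1 n2 E}"
    using two_chord_edges_adjacent unfolding bip_edges_def by blast
  then have "measure_pmf.prob (bip_random_graph n1 n2 p) {E. two_chord_path (bip_adj n1 n2 E) vs i j}
      \<le> measure_pmf.prob (bip_random_graph n1 n2 p) {E. two_chord_edges vs i j \<subseteq> bip_edges n1 n2 E}"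
    by (rule measure_pmf.finite_measure_mono) simp
  also have "\<dots> \<le> p ^ (length vs + 1)" using prob_subset_bip_edges_le[OF assms] card by metis
  finally show ?thesis .
qed

definition bip_alternating_lists :: "nat \<Rightarrow> nat \<Rightarrow> nat \<Rightarrow> (nat + nat) list set" where
  "bip_alternating_lists n1 n2 m =
     alternating_lists (Inl ` {..<n1}) (Inr ` {..<n2}) m \<union> alternating_lists (Inr ` {..<n2}) (Inl ` {..<n1}) m"

lemma two_chord_path_bip_alternating:
  assumes "two_chord_path (bip_adj n1 n2 E) vs i j"
  shows "vs \<in> bip_alternating_lists n1 n2 (length vs)"
proof -
  let ?A = "Inl ` {..<n1} :: (nat + nat) set" and ?B = "Inr ` {..<n2} :: (nat + nat) set"
  have AB: "y \<in> ?B" if "bip_adj n1 n2 E x y" "x \<in> ?A" for x y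
    using that by (auto simp: bip_adj_iff)
  have BA: "y \<in> ?A" if "bip_adj n1 n2 E x y" "x \<in> ?B" for x y
    using that by (auto simp: bip_adj_iff)
  have vs: "successively (bip_adj n1 n2 E) vs" "Suc 0 < length vs"
    using assms by (auto simp: two_chord_path_def)
  moreover have "hd vs = vs ! 0" using vs(2) by (cases vs) auto
  ultimately have "bip_adj n1 n2 E (hd vs) (vs ! 1)" by (simp add: successively_nth)
  then consider "hd vs \<in> ?A" | "hd vs \<in> ?B" by (auto simp: bip_adj_iff)
  then show ?thesis
  proof cases
    case 1
    then show ?thesis
      using successively_alternating_lists[OF vs(1), of ?A ?B] AB BA
      by (simp add: bip_alternating_lists_def)
  next
    case 2
    then show ?thesis
      using successively_alternating_lists[OF vs(1), of ?B ?A] AB BA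
      by (simp add: bip_alternating_lists_def)
  qed
qed

lemma card_bip_alternating_lists_le:
  assumes "0 < n1" "n1 \<le> n2"
  shows "real (card (bip_alternating_lists n1 n2 m)) \<le> 2 * sqrt (real n1 * real n2) ^ (m + 1) / real n1"
proof -
  define L where "L = bip_alternating_lists n1 n2 m"
  define s where "s = sqrt (real n1 * real n2) ^ (m + 1)"
  have "card L \<le> n1 ^ ((m + 1) div 2) * n2 ^ (m div 2) + n2 ^ ((m + 1) div 2) * n1 ^ (m div 2)"
    using card_alternating_lists_le[of "Inl ` {..<n1}" "Inr ` {..<n2}" m]
      card_alternating_lists_le[of "Inr ` {..<n2}" "Inl ` {..<n1}" m]
    unfolding L_def bip_alternating_lists_def
    by (intro order.trans[OF card_Un_le] add_mono) (simp_all add: card_image)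
  then have "real (card L)
      \<le> real n1 ^ ((m + 1) div 2) * real n2 ^ (m div 2) + real n2 ^ ((m + 1) div 2) * real n1 ^ (m div 2)"
    by (metis of_nat_le_iff of_nat_add of_nat_mult of_nat_power)
  also have "\<dots> \<le> s / real n1 + s / real n1"
    using alternating_power_le[of "real n1" "real n2" m] assms
    by (intro add_mono) (simp_all add: pos_le_divide_eq s_def mult.commute)
  finally show ?thesis by (simp add: L_def s_def)
qed

lemma two_chord_paths_of_length_subset:
  "{E. \<exists>vs i j. length vs = m \<and> two_chord_path (bip_adj n1 n2 E) vs i j}
     \<subseteq> (\<Union>(vs, i, j) \<in> bip_alternating_lists n1 n2 m \<times> {..<m} \<times> {..<m}.
           {E. two_chord_path (bip_adj n1 n2 E) vs i j})"
proof
  fix E assume "E \<in> {E. \<exists>vs i j. length vs = m \<and> two_chord_path (bip_adj n1 n2 E) vs i j}"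
  then obtain vs i j where vs: "length vs = m" "two_chord_path (bip_adj n1 n2 E) vs i j" by blast
  then have "i < m" "j < m" by (auto simp: two_chord_path_def)
  then have "(vs, i, j) \<in> bip_alternating_lists n1 n2 m \<times> {..<m} \<times> {..<m}"
    using two_chord_path_bip_alternating[OF vs(2)] vs(1) by simp
  then show "E \<in> (\<Union>(vs, i, j) \<in> bip_alternating_lists n1 n2 m \<times> {..<m} \<times> {..<m}.
           {E. two_chord_path (bip_adj n1 n2 E) vs i j})"
    using vs(2) by blast
qed

lemma prob_two_chord_path_of_length_le_card:
  assumes "0 \<le> p" "p \<le> 1"
  shows "measure_pmf.prob (bip_random_graph n1 n2 p)
      {E. \<exists>vs i j. length vs = m \<and> two_chord_path (bip_adj n1 n2 E) vs i j}
    \<le> real (card (bip_alternating_lists n1 n2 m)) * real m ^ 2 * p ^ (m + 1)"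
proof -
  define M where "M = bip_random_graph n1 n2 p"
  define T where "T = bip_alternating_lists n1 n2 m \<times> {..<m} \<times> {..<m}"
  define Ev where "Ev = (\<lambda>(vs, i, j). {E. two_chord_path (bip_adj n1 n2 E) vs i j})"
  have "finite T" by (simp add: T_def bip_alternating_lists_def finite_alternating_lists)
  have "measure_pmf.prob M {E. \<exists>vs i j. length vs = m \<and> two_chord_path (bip_adj n1 n2 E) vs i j}
      \<le> measure_pmf.prob M (\<Union>t\<in>T. Ev t)"
    using two_chord_paths_of_length_subset unfolding T_def Ev_def
    by (rule measure_pmf.finite_measure_mono) simp
  also have "\<dots> \<le> (\<Sum>t\<in>T. measure_pmf.prob M (Ev t))"
    using measure_pmf.finite_measure_subadditive_finite[OF \<open>finite T\<close>] by simp
  also have "\<dots> \<le> (\<Sum>t\<in>T. p ^ (m + 1))"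
  proof (rule sum_mono)
    fix t assume "t \<in> T"
    then obtain vs i j where "t = (vs, i, j)" "length vs = m"
      by (auto simp: T_def bip_alternating_lists_def dest: length_alternating_lists)
    then show "measure_pmf.prob M (Ev t) \<le> p ^ (m + 1)"
      using prob_two_chord_path_le[OF assms, of n1 n2 vs i j] by (simp add: M_def Ev_def)
  qed
  also have "\<dots> = real (card (bip_alternating_lists n1 n2 m)) * real m ^ 2 * p ^ (m + 1)"
    by (simp add: T_def card_cartesian_product power2_eq_square)
  finally show ?thesis by (simp add: M_def)
qed

lemma prob_two_chord_path_of_length_le:
  fixes d :: real
  assumes "0 < d" "d < 1" "0 < n1" "n1 \<le> n2"
  shows "measure_pmf.prob (bip_random_graph n1 n2 (d / sqrt (real n1 * real n2)))
      {E. \<exists>vs i j. length vs = m \<and> two_chord_path (bip_adj n1 n2 E) vs i j}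
    \<le> 2 * real m ^ 2 * d ^ (m + 1) / real n1"
proof -
  define s where "s = sqrt (real n1 * real n2)"
  have "0 < n2" using assms(3,4) by simp
  then have "1 \<le> s" using assms(3) by (simp add: s_def Suc_le_eq flip: of_nat_mult)
  then have p: "0 \<le> d / s" "d / s \<le> 1" using assms(1,2) by (simp_all add: field_simps)
  have "real (card (bip_alternating_lists n1 n2 m)) \<le> 2 * s ^ (m + 1) / real n1"
    using card_bip_alternating_lists_le[OF assms(3,4)] by (simp add: s_def)
  then have "real (card (bip_alternating_lists n1 n2 m)) * (real m ^ 2 * (d / s) ^ (m + 1))
      \<le> 2 * s ^ (m + 1) / real n1 * (real m ^ 2 * (d / s) ^ (m + 1))"
    by (rule mult_right_mono) (intro mult_nonneg_nonneg zero_le_power p(1) zero_le_power2)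
  also have "\<dots> = 2 * real m ^ 2 * d ^ (m + 1) / real n1"
    using \<open>1 \<le> s\<close> by (simp add: power_divide)
  finally show ?thesis
    using prob_two_chord_path_of_length_le_card[OF p, of n1 n2 m] by (simp add: s_def mult.assoc)
qed

lemma has_complex_component_two_chord_path:
  "has_complex_component n1 n2 E \<Longrightarrow> \<exists>vs i j. two_chord_path (bip_adj n1 n2 E) vs i j"
  unfolding has_complex_component_def
  by (auto intro: complex_component_two_chord_path simp: bip_adj_def split: sum.splits)

lemma prob_has_complex_component_le:
  fixes d :: real
  assumes "0 < d" "d < 1" "0 < n1" "n1 \<le> n2"
  shows "measure_pmf.prob (bip_random_graph n1 n2 (d / sqrt (real n1 * real n2)))
      {E. has_complex_component n1 n2 E}
    \<le> 2 * (\<Sum>m. real m ^ 2 * d ^ (m + 1)) / real n1"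
proof -
  define M where "M = bip_random_graph n1 n2 (d / sqrt (real n1 * real n2))"
  define Ev where "Ev m = {E. \<exists>vs i j. length vs = m \<and> two_chord_path (bip_adj n1 n2 E) vs i j}" for m
  define b where "b m = 2 / real n1 * (real m ^ 2 * d ^ (m + 1))" for m
  have bound: "measure_pmf.prob M (Ev m) \<le> b m" for m
    using prob_two_chord_path_of_length_le[OF assms] by (simp add: M_def Ev_def b_def mult.assoc)
  have K: "summable (\<lambda>m. real m ^ 2 * d ^ (m + 1))" using summable_square_times_power assms by simp
  then have "summable b" unfolding b_def by (rule summable_mult)
  have "summable (\<lambda>m. measure_pmf.prob M (Ev m))"
    by (rule summable_comparison_test'[OF \<open>summable b\<close>, of 0]) (simp add: bound)
  have "{E. has_complex_component n1 n2 E} \<subseteq> (\<Union>m. Ev m)"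
    using has_complex_component_two_chord_path by (auto simp: Ev_def)
  then have "measure_pmf.prob M {E. has_complex_component n1 n2 E} \<le> measure_pmf.prob M (\<Union>m. Ev m)"
    by (rule measure_pmf.finite_measure_mono) simp
  also have "\<dots> \<le> (\<Sum>m. measure_pmf.prob M (Ev m))"
    using \<open>summable (\<lambda>m. measure_pmf.prob M (Ev m))\<close>
    by (rule measure_pmf.finite_measure_subadditive_countably[rotated]) simp
  also have "\<dots> \<le> (\<Sum>m. b m)"
    using bound \<open>summable (\<lambda>m. measure_pmf.prob M (Ev m))\<close> \<open>summable b\<close> by (rule suminf_le)
  also have "\<dots> = 2 * (\<Sum>m. real m ^ 2 * d ^ (m + 1)) / real n1"
    unfolding b_def by (subst suminf_mult[OF K]) simp
  finally show ?thesis by (simp add: M_def)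
qed

theorem lemma3p1:
  fixes d :: real and n2 :: "nat \<Rightarrow> nat"
  assumes "0 < d" and "d < 1"
    and "\<forall>\<^sub>F n1 in sequentially. n1 \<le> n2 n1"
  shows "(\<lambda>n1. measure_pmf.prob
             (bip_random_graph n1 (n2 n1) (d / sqrt (real n1 * real (n2 n1))))
             {E. has_complex_component n1 (n2 n1) E}) \<longlonglongrightarrow> 0"
proof -
  have "\<forall>\<^sub>F n1 in sequentially. 0 < n1 \<and> n1 \<le> n2 n1"
    using assms(3) eventually_gt_at_top[of 0] by eventually_elim simp
  then show ?thesis
    by (intro tendsto_sandwich[OF _ _ tendsto_const lim_const_over_n])
      (auto elim!: eventually_mono intro!: prob_has_complex_component_le assms(1,2))
qed

end
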